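(* Let $n\ge p\ge 1$, $A$ an $n\times n$ symmetric matrix, $N=\operatorname{diag}(\mu_1,\dots,\mu_p)$ with $0<\mu_1<\dots<\mu_p$, $f(X)=\operatorname{tr}(X^TAXN)$ on $\mathrm{St}(p,n)$, and $R_X(\xi)=\mathrm{qf}(X+\xi)$ the QR retraction. For any (smooth) Riemannian metric $\langle\cdot,\cdot\rangle$ on $\mathrm{St}(p,n)$ there exists $L>0$ such that \[ \bigl|\mathrm{D}(f\circ R_X)(t\eta)[\eta]-\mathrm{D}(f\circ R_X)(0)[\eta]\bigr|\le Lt \] for all $X\in\mathrm{St}(p,n)$, $\eta\in T_X\mathrm{St}(p,n)$ with $\|\eta\|_X=1$ (norm from that metric), and $t\ge 0$. In particular ($p=1$) this holds for $f(x)=x^TAx$ on $S^{n-1}$ with the metric $g_x(\xi,\eta)=\xi^TG_x\eta$, $G_x=\operatorname{diag}(10000(x^{(1)})^2+1,1,\dots,1)$, and the retraction $R_x(\xi)=(x+\xi)/\|x+\xi\|$.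
   Context: $\mathrm{St}(p,n)=\{X\in\mathbb{R}^{n\times p}: X^TX=I_p\}$; for a full-rank $B\in\mathbb{R}^{n\times p}$, $\mathrm{qf}(B)$ denotes the $Q$-factor of the unique decomposition $B=QR'$ with $Q\in\mathrm{St}(p,n)$ and $R'$ upper triangular with positive diagonal. $x^{(1)}$ denotes the first component of $x$. *)

theory Defs
  imports "HOL-Analysis.Analysis"
begin

fun ddiff :: "('a::real_normed_vector \<Rightarrow> 'b::real_normed_vector) \<Rightarrow> 'a list \<Rightarrow> 'a \<Rightarrow> 'b" where
  "ddiff f [] = f"
| "ddiff f (v # vs) = (\<lambda>x. frechet_derivative (ddiff f vs) (at x) v)"

definition smooth_on :: "'a::real_normed_vector set \<Rightarrow> ('a \<Rightarrow> 'b::real_normed_vector) \<Rightarrow> bool" where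
  "smooth_on U f \<longleftrightarrow> open U \<and>
     (\<forall>vs. continuous_on U (ddiff f vs) \<and> (\<forall>x\<in>U. ddiff f vs differentiable (at x)))"

definition smooth_on_subset :: "'a::real_normed_vector set \<Rightarrow> ('a \<Rightarrow> 'b::real_normed_vector) \<Rightarrow> bool" where
  "smooth_on_subset S f \<longleftrightarrow>
     (\<forall>z\<in>S. \<exists>U F. z \<in> U \<and> smooth_on U F \<and> (\<forall>w\<in>U \<inter> S. F w = f w))"

definition stiefel :: "(real^'p^'n) set" where
  "stiefel = {X. transpose X ** X = mat 1}"

definition stiefel_tangent :: "real^'p^'n \<Rightarrow> (real^'p^'n) set" where
  "stiefel_tangent X = {\<xi>. transpose X ** \<xi> + transpose \<xi> ** X = 0}"

definition upper_triangular_pos :: "((real, 'p::{finite,linorder}) vec, 'p) vec \<Rightarrow> bool" where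
  "upper_triangular_pos R \<longleftrightarrow> (\<forall>i j. j < i \<longrightarrow> R $ i $ j = 0) \<and> (\<forall>i. R $ i $ i > 0)"

text \<open>Q-factor of the (unique) QR decomposition B = Q R, Q in St(p,n), R upper triangular with
  positive diagonal; columns ordered by the linear order of the index type 'p.\<close>
definition qf :: "((real, 'p::{finite,linorder}) vec, 'n::finite) vec \<Rightarrow> ((real, 'p) vec, 'n) vec" where
  "qf B = (THE Q. Q \<in> stiefel \<and> (\<exists>R. upper_triangular_pos R \<and> B = Q ** R))"

definition riemannian_metric_stiefel ::
  "(real^'p^'n \<Rightarrow> real^'p^'n \<Rightarrow> real^'p^'n \<Rightarrow> real) \<Rightarrow> bool" where
  "riemannian_metric_stiefel g \<longleftrightarrow>
     (\<forall>X\<in>stiefel.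
        (\<forall>\<xi>\<in>stiefel_tangent X. \<forall>\<eta>\<in>stiefel_tangent X. \<forall>\<zeta>\<in>stiefel_tangent X. \<forall>a b::real.
            g X (a *\<^sub>R \<xi> + b *\<^sub>R \<eta>) \<zeta> = a * g X \<xi> \<zeta> + b * g X \<eta> \<zeta>) \<and>
        (\<forall>\<xi>\<in>stiefel_tangent X. \<forall>\<eta>\<in>stiefel_tangent X. g X \<xi> \<eta> = g X \<eta> \<xi>) \<and>
        (\<forall>\<xi>\<in>stiefel_tangent X. \<xi> \<noteq> 0 \<longrightarrow> g X \<xi> \<xi> > 0)) \<and>
     smooth_on_subset {(X, \<xi>, \<eta>). X \<in> stiefel \<and> \<xi> \<in> stiefel_tangent X \<and> \<eta> \<in> stiefel_tangent X}
       (\<lambda>(X, \<xi>, \<eta>). g X \<xi> \<eta>)"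

definition brockett :: "real^'n^'n \<Rightarrow> real^'p^'p \<Rightarrow> real^'p^'n \<Rightarrow> real" where
  "brockett A N X = trace (transpose X ** A ** X ** N)"

definition diag_mat :: "real^'p \<Rightarrow> real^'p^'p" where
  "diag_mat \<mu> = (\<chi> i j. if i = j then \<mu> $ i else 0)"

definition first_idx :: "'n::{finite,linorder}" where
  "first_idx = Min UNIV"

definition example_metric :: "(real, 'n::{finite,linorder}) vec \<Rightarrow> (real, 'n) vec \<Rightarrow> (real, 'n) vec \<Rightarrow> real" where
  "example_metric x \<xi> \<eta> =
     \<xi> \<bullet> ((\<chi> i j. if i = j then (if i = first_idx then 10000 * (x $ first_idx)^2 + 1 else 1) else 0) *v \<eta>)"

definition sphere_retr :: "real^'n \<Rightarrow> real^'n \<Rightarrow> real^'n" where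
  "sphere_retr x \<xi> = (1 / norm (x + \<xi>)) *\<^sub>R (x + \<xi>)"

definition rayleigh :: "real^'n^'n \<Rightarrow> real^'n \<Rightarrow> real" where
  "rayleigh A x = x \<bullet> (A *v x)"

end

theory Submission
  imports Defs
begin

text \<open>Write \<open>B = X + s\<eta>\<close>. Since \<open>\<eta>\<close> is tangent, \<open>(Bv)\<^sup>T(Bw) = v\<^sup>Tw + s\<^sup>2 (\<eta>v)\<^sup>T(\<eta>w)\<close>, so \<open>B\<close>
  has full rank and \<open>Q = qf(B)\<close> exists; its first \<open>k\<close> columns span the same space as the first \<open>k\<close>
  columns of \<open>B\<close>. As \<open>N\<close> is diagonal, \<open>f(Q) = \<Sum>\<^sub>j \<mu>\<^sub>j q\<^sub>j\<^sup>T A q\<^sub>j\<close> is a combination of traces of \<open>A\<close>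
  compressed to these spans. Choose an orthonormal basis \<open>v\<^sub>1, \<dots>, v\<^sub>k\<close> of the first \<open>k\<close> coordinates
  whose images under \<open>\<eta>\<close> are orthogonal (a singular value decomposition); then the \<open>Bv\<^sub>i\<close> are
  orthogonal too, and the compressed trace is the sum of the Rayleigh quotients of \<open>A\<close> along the
  lines \<open>Xv\<^sub>i + s \<eta>v\<^sub>i\<close>. These are explicit rational functions of \<open>s\<close> whose derivatives are
  Lipschitz with constant \<open>9 \<parallel>A\<parallel> \<parallel>\<eta>v\<^sub>i\<parallel>\<^sup>2\<close>. Finally \<open>\<parallel>\<eta>\<parallel>\<close> is bounded for \<open>g(\<eta>,\<eta>) = 1\<close> by
  compactness of the unit tangent bundle. The sphere example is a single such line, with
  \<open>\<parallel>\<eta>\<parallel> \<le> 1\<close> because the example metric dominates the Euclidean one.\<close>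

section \<open>Rayleigh quotients along lines\<close>

definition rayleigh_line :: "real \<Rightarrow> real \<Rightarrow> real \<Rightarrow> real \<Rightarrow> real \<Rightarrow> real" where
  "rayleigh_line a b c m s = (a + 2 * b * s + c * s^2) / (1 + m * s^2)"

definition rayleigh_line_deriv :: "real \<Rightarrow> real \<Rightarrow> real \<Rightarrow> real \<Rightarrow> real \<Rightarrow> real" where
  "rayleigh_line_deriv a b c m s = (2 * b + 2 * (c - a * m) * s - 2 * b * m * s^2) / (1 + m * s^2)^2"

lemma has_real_derivative_rayleigh_line:
  assumes "m \<ge> 0"
  shows "(rayleigh_line a b c m has_real_derivative rayleigh_line_deriv a b c m s) (at s)"
proof -
  have nz: "1 + m * s^2 \<noteq> 0" using assms by (simp add: add_nonneg_eq_0_iff)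
  show ?thesis unfolding rayleigh_line_def[abs_def] rayleigh_line_deriv_def
    apply (rule derivative_eq_intros refl | simp add: nz)+
    using nz apply (simp add: field_simps power2_eq_square)
    done
qed

lemma rayleigh_line_deriv_diff:
  assumes "m \<ge> 0"
  shows "rayleigh_line_deriv a b c m t - rayleigh_line_deriv a b c m 0
           = t * (2*(c - a*m) - 6*b*m*t - 2*b*m^2*t^3) / (1 + m*t^2)^2"
proof -
  have nz: "1 + m*t^2 \<noteq> 0" using assms by (simp add: add_nonneg_eq_0_iff)
  have "rayleigh_line_deriv a b c m t - rayleigh_line_deriv a b c m 0
          = (2*b + 2*(c - a*m)*t - 2*b*m*t^2 - 2*b*(1 + m*t^2)^2) / (1 + m*t^2)^2"
    unfolding rayleigh_line_deriv_def using nz by (simp add: diff_divide_distrib)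
  also have "2*b + 2*(c - a*m)*t - 2*b*m*t^2 - 2*b*(1 + m*t^2)^2
               = t * (2*(c - a*m) - 6*b*m*t - 2*b*m^2*t^3)"
    by (simp add: algebra_simps power2_eq_square power3_eq_cube)
  finally show ?thesis .
qed

lemma four_mult_le_one_plus_square: "4 * u \<le> (1 + u)^2" for u :: real
proof -
  have "(1 + u)^2 - 4 * u = (1 - u)^2" by (simp add: power2_eq_square algebra_simps)
  then show ?thesis by (metis diff_ge_0_iff_ge zero_le_power2)
qed

lemma cube_le_one_plus_pow4:
  fixes u :: real
  assumes "u \<ge> 0"
  shows "u^3 \<le> (1 + u)^4"
proof (cases "u \<le> 1")
  case True
  then have "u^3 \<le> 1" using assms by (simp add: power_le_one)
  also have "1 \<le> (1 + u)^4" using assms by simp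
  finally show ?thesis .
next
  case False
  then have "u^3 \<le> u^4" by (simp add: power_increasing)
  also have "\<dots> \<le> (1 + u)^4" using assms by (simp add: power_mono)
  finally show ?thesis .
qed

lemma abs_le_of_square_le: "x^2 \<le> y^2 \<Longrightarrow> 0 \<le> y \<Longrightarrow> \<bar>x\<bar> \<le> y" for x y :: real
  by (metis power2_abs power2_le_imp_le)

lemma rayleigh_line_deriv_numerator_bound:
  fixes a b c m t :: real
  assumes m: "m \<ge> 0" and K: "K \<ge> 0" and a: "\<bar>a\<bar> \<le> K" and b: "b^2 \<le> K^2 * m"
    and c: "\<bar>c\<bar> \<le> K * m" and t: "t \<ge> 0"
  defines "D \<equiv> 1 + m*t^2"
  shows "\<bar>2*(c - a*m) - 6*b*m*t - 2*b*m^2*t^3\<bar> \<le> 9*K*m*D^2"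
proof -
  have u: "m*t^2 \<ge> 0" using m by simp
  have D1: "1 \<le> D" using u unfolding D_def by simp
  then have D2: "D \<le> D^2" using mult_left_mono[OF D1, of D] by (simp add: power2_eq_square)
  have D2': "1 \<le> D^2" using D1 by simp
  have KmD: "0 \<le> K*m*D" using K m D1 by simp
  have e1: "\<bar>2*(c - a*m)\<bar> \<le> 4*K*m"
    using a c m abs_triangle_ineq4[of c "a*m"] mult_right_mono[OF a m] by (simp add: abs_mult)
  have e2: "\<bar>b*m*t\<bar> \<le> K*m*D/2"
  proof (rule abs_le_of_square_le)
    have "(b*m*t)^2 \<le> K^2*m*m^2*t^2"
      using b m by (simp add: power_mult_distrib mult_right_mono)
    also have "\<dots> = (K*m)^2 * (4*(m*t^2)) / 4" by (simp add: power2_eq_square)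
    also have "\<dots> \<le> (K*m)^2 * D^2 / 4"
      unfolding D_def by (intro divide_right_mono mult_left_mono four_mult_le_one_plus_square) simp_all
    finally show "(b*m*t)^2 \<le> (K*m*D/2)^2" by (simp add: power_divide power_mult_distrib)
  qed (use KmD in simp)
  have e3: "\<bar>b*m^2*t^3\<bar> \<le> K*m*D^2"
  proof (rule abs_le_of_square_le)
    have "(b*m^2*t^3)^2 \<le> K^2*m*m^4*t^6"
      using b m by (simp add: power_mult_distrib mult_right_mono flip: power_mult)
    also have "\<dots> = (K*m)^2 * (m*t^2)^3"
      by (simp add: power_mult_distrib power_numeral_reduce flip: power_mult power_add)
    also have "\<dots> \<le> (K*m)^2 * (D^2)^2"
      unfolding D_def using cube_le_one_plus_pow4[OF u] by (simp add: mult_left_mono flip: power_mult)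
    finally show "(b*m^2*t^3)^2 \<le> (K*m*D^2)^2" by (simp add: power_mult_distrib)
  qed (use K m in simp)
  have "\<bar>2*(c - a*m) - 6*b*m*t - 2*b*m^2*t^3\<bar> \<le> 4*K*m + 3*K*m*D + 2*K*m*D^2"
  proof -
    have "\<bar>2*(c - a*m) - 6*(b*m*t) - 2*(b*m^2*t^3)\<bar>
            \<le> \<bar>2*(c - a*m)\<bar> + 6*\<bar>b*m*t\<bar> + 2*\<bar>b*m^2*t^3\<bar>" by arith
    then show ?thesis using e1 e2 e3 by (simp add: mult.assoc)
  qed
  also have "\<dots> \<le> 9*K*m*D^2"
    using mult_left_mono[OF D2', of "4*K*m"] mult_left_mono[OF D2, of "3*K*m"] K m by simp
  finally show ?thesis .
qed

lemma rayleigh_line_deriv_lipschitz: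
  assumes m: "m \<ge> 0" and K: "K \<ge> 0" and a: "\<bar>a\<bar> \<le> K" and b: "b^2 \<le> K^2 * m"
    and c: "\<bar>c\<bar> \<le> K * m" and t: "t \<ge> 0"
  shows "\<bar>rayleigh_line_deriv a b c m t - rayleigh_line_deriv a b c m 0\<bar> \<le> 9 * K * m * t"
proof -
  define D where "D = 1 + m*t^2"
  let ?N = "2*(c - a*m) - 6*b*m*t - 2*b*m^2*t^3"
  have "1 \<le> D" using m unfolding D_def by simp
  have "\<bar>?N\<bar> / D^2 \<le> 9*K*m"
    using rayleigh_line_deriv_numerator_bound[OF assms, folded D_def] \<open>1 \<le> D\<close>
    by (simp add: divide_le_eq algebra_simps)
  then have "t * (\<bar>?N\<bar> / D^2) \<le> t * (9*K*m)"
    using t by (rule mult_left_mono)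
  moreover have "\<bar>rayleigh_line_deriv a b c m t - rayleigh_line_deriv a b c m 0\<bar> = \<bar>t * ?N / D^2\<bar>"
    unfolding D_def by (simp only: rayleigh_line_deriv_diff[OF m])
  moreover have "\<bar>t * ?N / D^2\<bar> = t * (\<bar>?N\<bar> / D^2)"
    using t by (simp only: abs_mult abs_divide abs_of_nonneg zero_le_power2 times_divide_eq_right)
  moreover have "t * (9*K*m) = 9*K*m*t" by simp
  ultimately show ?thesis by linarith
qed

lemma norm_matrix_vector_le: "norm (A *v x) \<le> norm A * norm x"
  for A :: "real^'n^'m" and x :: "real^'n"
proof -
  have "(norm (A *v x))^2 = (\<Sum>i\<in>UNIV. (A *v x)$i * (A *v x)$i)"
    by (simp add: power2_norm_eq_inner inner_vec_def)
  also have "\<dots> = (\<Sum>i\<in>UNIV. (A$i \<bullet> x)^2)"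
    by (simp only: matrix_vector_mul_component power2_eq_square)
  also have "\<dots> \<le> (\<Sum>i\<in>UNIV. (norm (A$i) * norm x)^2)"
  proof (rule sum_mono)
    fix i
    show "(A$i \<bullet> x)^2 \<le> (norm (A$i) * norm x)^2"
      using Cauchy_Schwarz_ineq2[of "A$i" x] abs_le_square_iff by force
  qed
  also have "\<dots> = (norm A * norm x)^2"
    by (simp add: power_mult_distrib sum_distrib_right power2_norm_eq_inner inner_vec_def)
  finally show ?thesis by (rule power2_le_imp_le) simp
qed

lemma inner_matrix_vector_transpose: "(A *v x) \<bullet> y = x \<bullet> (transpose A *v y)"
  for A :: "real^'n^'m"
  by (metis dot_lmul_matrix inner_commute transpose_matrix_vector)

lemma abs_inner_matrix_vector_le: "\<bar>u \<bullet> (A *v w)\<bar> \<le> norm u * norm A * norm w"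
  for A :: "real^'n^'m"
proof -
  have "\<bar>u \<bullet> (A *v w)\<bar> \<le> norm u * norm (A *v w)" by (rule Cauchy_Schwarz_ineq2)
  also have "\<dots> \<le> norm u * (norm A * norm w)" by (simp add: mult_left_mono norm_matrix_vector_le)
  finally show ?thesis by (simp add: mult.assoc)
qed

text \<open>For a unit vector \<open>x \<perp> e\<close>: the Rayleigh quotient of \<open>A\<close> at \<open>x + s e\<close>.\<close>
definition rayleigh_along :: "real^'n^'n \<Rightarrow> real^'n \<Rightarrow> real^'n \<Rightarrow> real \<Rightarrow> real" where
  "rayleigh_along A x e = rayleigh_line (x \<bullet> (A *v x)) (x \<bullet> (A *v e)) (e \<bullet> (A *v e)) (e \<bullet> e)"

definition rayleigh_along_deriv :: "real^'n^'n \<Rightarrow> real^'n \<Rightarrow> real^'n \<Rightarrow> real \<Rightarrow> real" where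
  "rayleigh_along_deriv A x e =
     rayleigh_line_deriv (x \<bullet> (A *v x)) (x \<bullet> (A *v e)) (e \<bullet> (A *v e)) (e \<bullet> e)"

lemma has_real_derivative_rayleigh_along:
  "(rayleigh_along A x e has_real_derivative rayleigh_along_deriv A x e s) (at s)"
  unfolding rayleigh_along_def rayleigh_along_deriv_def
  by (rule has_real_derivative_rayleigh_line) simp

lemma rayleigh_along_eq:
  fixes x e :: "real^'n" and A :: "real^'n^'n"
  assumes "x \<bullet> x = 1" "x \<bullet> e = 0" "transpose A = A"
  shows "rayleigh_along A x e s = (x + s *\<^sub>R e) \<bullet> (A *v (x + s *\<^sub>R e)) / ((x + s *\<^sub>R e) \<bullet> (x + s *\<^sub>R e))"
proof -
  have sym: "e \<bullet> (A *v x) = x \<bullet> (A *v e)"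
    by (metis assms(3) inner_commute inner_matrix_vector_transpose)
  have "(x + s *\<^sub>R e) \<bullet> (A *v (x + s *\<^sub>R e)) = x \<bullet> (A *v x) + 2 * (x \<bullet> (A *v e)) * s + e \<bullet> (A *v e) * s^2"
    by (simp only: matrix_vector_right_distrib matrix_vector_mult_scaleR inner_add_left inner_add_right
        inner_scaleR_left inner_scaleR_right sym) (simp add: power2_eq_square algebra_simps)
  moreover have "(x + s *\<^sub>R e) \<bullet> (x + s *\<^sub>R e) = 1 + e \<bullet> e * s^2"
    using assms by (simp only: inner_add_left inner_add_right inner_scaleR_left inner_scaleR_right
        inner_commute[of e x]) (simp add: power2_eq_square)
  ultimately show ?thesis unfolding rayleigh_along_def rayleigh_line_def by simp
qed

lemma rayleigh_along_deriv_lipschitz: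
  fixes x e :: "real^'n" and A :: "real^'n^'n"
  assumes x: "norm x = 1" and M: "e \<bullet> e \<le> M" and t: "t \<ge> 0"
  shows "\<bar>rayleigh_along_deriv A x e t - rayleigh_along_deriv A x e 0\<bar> \<le> 9 * norm A * M * t"
proof -
  have "\<bar>x \<bullet> (A *v x)\<bar> \<le> norm A"
    using abs_inner_matrix_vector_le[of x A x] x by simp
  moreover have "(x \<bullet> (A *v e))^2 \<le> (norm A)^2 * (e \<bullet> e)"
  proof -
    have "\<bar>x \<bullet> (A *v e)\<bar> \<le> norm A * norm e"
      using abs_inner_matrix_vector_le[of x A e] x by simp
    then have "(x \<bullet> (A *v e))^2 \<le> (norm A * norm e)^2"
      by (metis abs_le_square_iff abs_norm_cancel abs_mult)
    then show ?thesis by (simp add: power_mult_distrib power2_norm_eq_inner)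
  qed
  moreover have "\<bar>e \<bullet> (A *v e)\<bar> \<le> norm A * (e \<bullet> e)"
    using abs_inner_matrix_vector_le[of e A e]
    by (simp add: power2_norm_eq_inner[symmetric] power2_eq_square mult.commute mult.left_commute)
  ultimately have "\<bar>rayleigh_along_deriv A x e t - rayleigh_along_deriv A x e 0\<bar> \<le> 9 * norm A * (e \<bullet> e) * t"
    unfolding rayleigh_along_deriv_def using t by (intro rayleigh_line_deriv_lipschitz) auto
  also have "\<dots> \<le> 9 * norm A * M * t"
    using M t by (simp add: mult_left_mono mult_right_mono)
  finally show ?thesis .
qed

section \<open>QR decomposition\<close>

lemma column_matrix_mult: "column j (Q ** R) = (\<Sum>i\<in>UNIV. R$i$j *\<^sub>R column i Q)"
  for Q :: "real^'p^'n" and R :: "real^'q^'p"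
  by (simp add: column_def matrix_matrix_mult_def vec_eq_iff mult.commute)

lemma transpose_matrix_mult_component: "(transpose Q ** B)$i$j = column i Q \<bullet> column j B"
  for Q B :: "real^'p^'n"
  by (simp add: matrix_matrix_mult_def transpose_def column_def inner_vec_def mult.commute)

lemma matrix_eq_columnsI: "(\<And>j. column j M = column j N) \<Longrightarrow> M = N"
  by (simp add: column_def vec_eq_iff)

lemma stiefel_iff_orthonormal_columns:
  "Q \<in> stiefel \<longleftrightarrow> (\<forall>i j. column i Q \<bullet> column j Q = (if i = j then 1 else 0))"
  by (simp add: stiefel_def matrix_mult_transpose_dot_column vec_eq_iff mat_def)

lemma orthonormal_family_independent:
  fixes f :: "'i \<Rightarrow> 'a::real_inner"
  assumes "\<And>i j. i \<in> S \<Longrightarrow> j \<in> S \<Longrightarrow> f i \<bullet> f j = (if i = j then 1 else 0)"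
  shows "independent (f ` S)" and "inj_on f S"
proof -
  show "inj_on f S"
    by (rule inj_onI) (metis assms one_neq_zero)
  show "independent (f ` S)"
  proof (rule pairwise_orthogonal_independent)
    show "pairwise orthogonal (f ` S)"
      unfolding pairwise_def orthogonal_def using assms by fastforce
    show "0 \<notin> f ` S" using assms by fastforce
  qed
qed

lemma card_orthonormal_le:
  fixes V :: "(real, 'p::finite) vec set"
  assumes "\<forall>v\<in>V. \<forall>w\<in>V. v \<bullet> w = (if v = w then 1 else 0)"
  shows "card V \<le> CARD('p)"
proof -
  have "independent V"
    using orthonormal_family_independent[of V id] assms by auto
  then show ?thesis using independent_bound by fastforce
qed

lemma orthonormal_family_expand:
  fixes f :: "'i \<Rightarrow> 'a::real_inner"
  assumes "finite I"
    and orth: "\<And>i j. i \<in> I \<Longrightarrow> j \<in> I \<Longrightarrow> f i \<bullet> f j = (if i = j then 1 else 0)"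
    and "v \<in> span (f ` I)"
  shows "v = (\<Sum>i\<in>I. (f i \<bullet> v) *\<^sub>R f i)"
proof -
  have "(\<Sum>u\<in>f ` I. (v \<bullet> u) *\<^sub>R u) = v"
  proof (rule orthonormal_basis_expand)
    show "pairwise orthogonal (f ` I)"
      unfolding pairwise_def orthogonal_def using orth by fastforce
    show "norm u = 1" if "u \<in> f ` I" for u
      using that orth by (auto simp: norm_eq_1)
  qed (use assms in auto)
  then show ?thesis
    using orthonormal_family_independent(2)[OF orth]
    by (simp add: sum.reindex inner_commute)
qed

definition down_closed :: "'p::linorder set \<Rightarrow> bool" where
  "down_closed S \<longleftrightarrow> (\<forall>i j. j \<in> S \<longrightarrow> i \<le> j \<longrightarrow> i \<in> S)"

lemma span_orthonormal_columns_eq: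
  fixes Q B :: "real^'p^'n"
  assumes orth: "\<And>i j. i \<in> S \<Longrightarrow> j \<in> S \<Longrightarrow> column i Q \<bullet> column j Q = (if i = j then 1 else 0)"
    and sub: "(\<lambda>i. column i Q) ` S \<subseteq> span ((\<lambda>i. column i B) ` S)"
  shows "span ((\<lambda>i. column i Q) ` S) = span ((\<lambda>i. column i B) ` S)"
proof -
  have ind: "independent ((\<lambda>i. column i Q) ` S)" and inj: "inj_on (\<lambda>i. column i Q) S"
    using orthonormal_family_independent[of S "\<lambda>i. column i Q", OF orth] by auto
  have "dim (span ((\<lambda>i. column i B) ` S)) = dim ((\<lambda>i. column i B) ` S)" by simp
  also have "\<dots> \<le> card ((\<lambda>i. column i B) ` S)" by (rule dim_le_card') simp
  also have "\<dots> \<le> card ((\<lambda>i. column i Q) ` S)"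
    using card_image_le[of S] card_image[OF inj] by simp
  finally have "span ((\<lambda>i. column i B) ` S) \<subseteq> span ((\<lambda>i. column i Q) ` S)"
    by (rule card_ge_dim_independent[OF sub ind])
  moreover have "span ((\<lambda>i. column i Q) ` S) \<subseteq> span ((\<lambda>i. column i B) ` S)"
    using sub by (simp add: span_minimal)
  ultimately show ?thesis by blast
qed

lemma column_in_span_columns_qr:
  fixes Q :: "((real,'p::{finite,linorder}) vec, 'n::finite) vec" and R :: "((real,'p) vec, 'p) vec"
  assumes R: "upper_triangular_pos R" and B: "B = Q ** R"
  shows "column j Q \<in> span ((\<lambda>i. column i B) ` {..j})"
proof (induction j rule: measure_induct_rule[of "\<lambda>j. card {l. l < j}"])
  case (less j)
  have "column j B = (\<Sum>i\<in>{..j}. R$i$j *\<^sub>R column i Q)"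
    unfolding B column_matrix_mult
    using R by (intro sum.mono_neutral_right) (auto simp: upper_triangular_pos_def)
  also have "\<dots> = R$j$j *\<^sub>R column j Q + (\<Sum>i\<in>{..<j}. R$i$j *\<^sub>R column i Q)"
  proof -
    have "{..j} = insert j {..<j}" by auto
    then show ?thesis by simp
  qed
  finally have "column j B - (\<Sum>i\<in>{..<j}. R$i$j *\<^sub>R column i Q) = R$j$j *\<^sub>R column j Q"
    by simp
  moreover have "R$j$j \<noteq> 0"
    using R unfolding upper_triangular_pos_def by (metis less_irrefl)
  ultimately have "column j Q = (1 / R$j$j) *\<^sub>R (column j B - (\<Sum>i\<in>{..<j}. R$i$j *\<^sub>R column i Q))"
    by simp
  moreover have "column i Q \<in> span ((\<lambda>i. column i B) ` {..j})" if "i < j" for i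
  proof -
    have "card {l. l < i} < card {l. l < j}"
      using that by (intro psubset_card_mono) auto
    then have "column i Q \<in> span ((\<lambda>i. column i B) ` {..i})" using less by blast
    also have "\<dots> \<subseteq> span ((\<lambda>i. column i B) ` {..j})"
      using that by (intro span_mono image_mono) auto
    finally show ?thesis .
  qed
  moreover have "column j B \<in> span ((\<lambda>i. column i B) ` {..j})" by (intro span_base) auto
  ultimately show ?case
    by (metis (no_types, lifting) lessThan_iff span_diff span_scale span_sum)
qed

lemma span_columns_qr:
  fixes Q :: "((real,'p::{finite,linorder}) vec, 'n::finite) vec" and R :: "((real,'p) vec, 'p) vec"
  assumes R: "upper_triangular_pos R" and B: "B = Q ** R" and S: "down_closed S"
  shows "span ((\<lambda>i. column i Q) ` S) = span ((\<lambda>i. column i B) ` S)"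
proof -
  have "column j B \<in> span ((\<lambda>i. column i Q) ` S)" if "j \<in> S" for j
  proof -
    have "column j B = (\<Sum>i\<in>S. R$i$j *\<^sub>R column i Q)"
      unfolding B column_matrix_mult using R S that
      by (intro sum.mono_neutral_right) (auto simp: upper_triangular_pos_def down_closed_def, metis not_le)
    also have "\<dots> \<in> span ((\<lambda>i. column i Q) ` S)"
      by (intro span_sum span_scale span_base) auto
    finally show ?thesis .
  qed
  moreover have "column j Q \<in> span ((\<lambda>i. column i B) ` S)" if "j \<in> S" for j
  proof -
    have "column j Q \<in> span ((\<lambda>i. column i B) ` {..j})" by (rule column_in_span_columns_qr[OF R B])
    also have "\<dots> \<subseteq> span ((\<lambda>i. column i B) ` S)"
      using S that unfolding down_closed_def by (intro span_mono image_mono) auto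
    finally show ?thesis .
  qed
  ultimately show ?thesis unfolding span_eq by auto
qed

lemma span_columns_qr_image:
  fixes Q :: "((real,'p::{finite,linorder}) vec, 'n::finite) vec" and R :: "((real,'p) vec, 'p) vec"
  assumes R: "upper_triangular_pos R" and B: "B = Q ** R" and S: "down_closed S"
    and V: "span V = span ((\<lambda>i. axis i 1) ` S)"
  shows "span ((\<lambda>i. column i Q) ` S) = span ((\<lambda>v. B *v v) ` V)"
proof -
  have "span ((\<lambda>i. column i Q) ` S) = span ((\<lambda>i. B *v axis i 1) ` S)"
    using span_columns_qr[OF R B S] by (simp add: matrix_vector_mult_basis)
  also have "\<dots> = (\<lambda>x. B *v x) ` span ((\<lambda>i. axis i 1) ` S)"
    using span_linear_image[OF matrix_vector_mul_linear[of B], of "(\<lambda>i. axis i 1) ` S"]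
    by (simp add: image_image)
  also have "\<dots> = span ((\<lambda>v. B *v v) ` V)"
    using span_linear_image[OF matrix_vector_mul_linear[of B], of V] V by simp
  finally show ?thesis .
qed

lemma inner_column_stiefel_mult:
  assumes "Q \<in> stiefel"
  shows "column j Q \<bullet> column k (Q ** R) = R$j$k"
proof -
  have "column j Q \<bullet> column k (Q ** R) = (\<Sum>i\<in>UNIV. R$i$k * (column j Q \<bullet> column i Q))"
    by (simp add: column_matrix_mult inner_sum_right)
  also have "\<dots> = (\<Sum>i\<in>UNIV. if j = i then R$i$k else 0)"
    using assms by (intro sum.cong) (auto simp: stiefel_iff_orthonormal_columns)
  finally show ?thesis by simp
qed

text \<open>Uniqueness goes column by column: \<open>q'\<^sub>j\<close> lies in the span of \<open>q\<^sub>1, \<dots>, q\<^sub>j\<close> and is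
  orthogonal to \<open>q\<^sub>1, \<dots>, q\<^sub>j\<^sub>-\<^sub>1\<close>, so \<open>q'\<^sub>j = \<plusminus>q\<^sub>j\<close>, and positivity of the diagonals fixes the sign.\<close>
lemma column_qr_parallel:
  fixes Q Q' :: "((real,'p::{finite,linorder}) vec, 'n::finite) vec" and R R' :: "((real,'p) vec, 'p) vec"
  assumes Q: "Q \<in> stiefel" and R: "upper_triangular_pos R" and B: "B = Q ** R"
    and Q': "Q' \<in> stiefel" and R': "upper_triangular_pos R'" and B': "B = Q' ** R'"
  shows "column j Q' = (column j Q \<bullet> column j Q') *\<^sub>R column j Q"
proof -
  have oQ: "\<And>i k. column i Q \<bullet> column k Q = (if i = k then 1 else 0)"
    using Q by (simp add: stiefel_iff_orthonormal_columns)
  have "column j Q' \<in> span ((\<lambda>i. column i B) ` {..j})" by (rule column_in_span_columns_qr[OF R' B'])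
  also have "\<dots> = span ((\<lambda>i. column i Q) ` {..j})"
    by (rule span_columns_qr[OF R B, symmetric]) (auto simp: down_closed_def)
  finally have "column j Q' = (\<Sum>i\<in>{..j}. (column i Q \<bullet> column j Q') *\<^sub>R column i Q)"
    by (intro orthonormal_family_expand[OF _ oQ]) auto
  also have "\<dots> = (\<Sum>i\<in>{..j}. if i = j then (column j Q \<bullet> column j Q') *\<^sub>R column j Q else 0)"
  proof (rule sum.cong)
    fix i assume "i \<in> {..j}"
    show "(column i Q \<bullet> column j Q') *\<^sub>R column i Q
            = (if i = j then (column j Q \<bullet> column j Q') *\<^sub>R column j Q else 0)"
    proof (cases "i = j")
      case False
      then have ij: "i < j" using \<open>i \<in> {..j}\<close> by auto
      have "column i Q \<in> span ((\<lambda>i. column i B) ` {..i})" by (rule column_in_span_columns_qr[OF R B])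
      also have "\<dots> \<subseteq> span ((\<lambda>i. column i B) ` {..<j})" using ij by (intro span_mono image_mono) auto
      also have "\<dots> = span ((\<lambda>i. column i Q') ` {..<j})"
        by (rule span_columns_qr[OF R' B', symmetric]) (auto simp: down_closed_def)
      finally have "orthogonal (column j Q') (column i Q)"
        by (rule orthogonal_to_span)
          (use Q' in \<open>auto simp: stiefel_iff_orthonormal_columns orthogonal_def\<close>)
      then show ?thesis using False by (simp add: orthogonal_def inner_commute)
    qed simp
  qed simp
  also have "\<dots> = (column j Q \<bullet> column j Q') *\<^sub>R column j Q" by simp
  finally show ?thesis .
qed

lemma qr_decomposition_unique:
  fixes Q Q' :: "((real,'p::{finite,linorder}) vec, 'n::finite) vec" and R R' :: "((real,'p) vec, 'p) vec"
  assumes Q: "Q \<in> stiefel" and R: "upper_triangular_pos R" and B: "B = Q ** R"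
    and Q': "Q' \<in> stiefel" and R': "upper_triangular_pos R'" and B': "B = Q' ** R'"
  shows "Q' = Q"
proof (rule matrix_eq_columnsI)
  fix j
  have oQ: "column j Q \<bullet> column j Q = 1"
    using Q by (simp add: stiefel_iff_orthonormal_columns)
  note eq = column_qr_parallel[OF assms, of j]
  define c where "c = column j Q \<bullet> column j Q'"
  have "R'$j$j = c * R$j$j"
    using inner_column_stiefel_mult[OF Q', of j j R'] inner_column_stiefel_mult[OF Q, of j j R] eq B B'
    by (metis c_def inner_scaleR_left)
  then have "c > 0"
    using R R' unfolding upper_triangular_pos_def by (metis zero_less_mult_pos2)
  moreover have "c * c = 1"
  proof -
    have "c * c = (c *\<^sub>R column j Q) \<bullet> (c *\<^sub>R column j Q)" using oQ by simp
    also have "\<dots> = column j Q' \<bullet> column j Q'" by (simp only: eq[folded c_def, symmetric])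
    finally show ?thesis using Q' by (simp add: stiefel_iff_orthonormal_columns)
  qed
  ultimately have "c = 1"
    by (metis abs_of_pos real_sqrt_abs2 real_sqrt_one)
  then show "column j Q' = column j Q" using eq c_def by simp
qed

lemma span_columns_subset_range:
  fixes B :: "real^'p^'n"
  shows "span ((\<lambda>i. column i B) ` T) \<subseteq> {B *v v | v. \<forall>i. i \<notin> T \<longrightarrow> v$i = 0}"
proof (rule span_minimal)
  show "(\<lambda>i. column i B) ` T \<subseteq> {B *v v | v. \<forall>i. i \<notin> T \<longrightarrow> v$i = 0}"
  proof clarify
    fix i assume "i \<in> T"
    have "column i B = B *v axis i 1"
      by (simp add: column_def matrix_vector_mult_def axis_def vec_eq_iff if_distrib[of "\<lambda>z. _ * z"] cong: if_cong)
    then show "\<exists>v. column i B = B *v v \<and> (\<forall>j. j \<notin> T \<longrightarrow> v $ j = 0)"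
      using \<open>i \<in> T\<close> by (intro exI[of _ "axis i 1"]) (auto simp: axis_def)
  qed
  show "subspace {B *v v | v. \<forall>i. i \<notin> T \<longrightarrow> v$i = 0}"
    unfolding subspace_def
  proof (intro conjI ballI allI)
    show "0 \<in> {B *v v | v. \<forall>i. i \<notin> T \<longrightarrow> v$i = 0}" by (intro CollectI exI[of _ 0]) auto
  next
    fix x y assume "x \<in> {B *v v | v. \<forall>i. i \<notin> T \<longrightarrow> v$i = 0}" "y \<in> {B *v v | v. \<forall>i. i \<notin> T \<longrightarrow> v$i = 0}"
    then obtain v w where "x = B *v v" "\<forall>i. i \<notin> T \<longrightarrow> v$i = 0" "y = B *v w" "\<forall>i. i \<notin> T \<longrightarrow> w$i = 0" by blast
    then show "x + y \<in> {B *v v | v. \<forall>i. i \<notin> T \<longrightarrow> v$i = 0}"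
      by (intro CollectI exI[of _ "v + w"]) (auto simp: matrix_vector_right_distrib)
  next
    fix c x assume "x \<in> {B *v v | v. \<forall>i. i \<notin> T \<longrightarrow> v$i = 0}"
    then obtain v where "x = B *v v" "\<forall>i. i \<notin> T \<longrightarrow> v$i = 0" by blast
    then show "c *\<^sub>R x \<in> {B *v v | v. \<forall>i. i \<notin> T \<longrightarrow> v$i = 0}"
      by (intro CollectI exI[of _ "c *\<^sub>R v"]) (auto simp: matrix_vector_mult_scaleR)
  qed
qed

lemma gram_schmidt_columns:
  fixes B :: "((real,'p::{finite,linorder}) vec, 'n::finite) vec"
  assumes inj: "\<And>v. B *v v = 0 \<Longrightarrow> v = 0"
  obtains z where "\<And>j. column j B - z j \<in> span ((\<lambda>i. column i B) ` {..<j})"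
    and "\<And>j w. w \<in> span ((\<lambda>i. column i B) ` {..<j}) \<Longrightarrow> orthogonal (z j) w"
    and "\<And>j. z j \<noteq> 0"
proof -
  let ?S = "\<lambda>j. span ((\<lambda>i. column i B) ` {..<j})"
  have "\<exists>z. column j B - z \<in> ?S j \<and> (\<forall>w\<in>?S j. orthogonal z w)" for j
  proof -
    obtain y z where "y \<in> ?S j" "\<And>w. w \<in> ?S j \<Longrightarrow> orthogonal z w" "column j B = y + z"
      using orthogonal_subspace_decomp_exists[of "(\<lambda>i. column i B) ` {..<j}" "column j B"]
      by metis
    then show ?thesis by (intro exI[of _ z]) auto
  qed
  then obtain z where zS: "\<And>j. column j B - z j \<in> ?S j"
    and zo: "\<And>j w. w \<in> ?S j \<Longrightarrow> orthogonal (z j) w"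
    by metis
  have "z j \<noteq> 0" for j
  proof
    assume "z j = 0"
    then have "column j B \<in> ?S j" using zS[of j] by simp
    then obtain v where v: "column j B = B *v v" "\<forall>i. i \<notin> {..<j} \<longrightarrow> v$i = 0"
      using span_columns_subset_range by blast
    have "column j B = B *v axis j 1"
      by (simp add: column_def matrix_vector_mult_def axis_def vec_eq_iff if_distrib[of "\<lambda>z. _ * z"]
          cong: if_cong)
    then have "B *v (axis j 1 - v) = 0" using v by (simp add: matrix_vector_mult_diff_distrib)
    then have "axis j 1 = v" using inj by fastforce
    then show False using v(2) by (metis axis_nth lessThan_iff less_irrefl zero_neq_one)
  qed
  with zS zo that show thesis by blast
qed

lemma gram_schmidt_orthonormal_columns:
  fixes B :: "((real,'p::{finite,linorder}) vec, 'n::finite) vec"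
  assumes inj: "\<And>v. B *v v = 0 \<Longrightarrow> v = 0"
  obtains Q where "Q \<in> stiefel" "\<And>j. column j Q \<in> span ((\<lambda>i. column i B) ` {..j})"
    "\<And>i j. i < j \<Longrightarrow> column j Q \<bullet> column i B = 0" "\<And>j. column j Q \<bullet> column j B > 0"
proof -
  let ?S = "\<lambda>j. span ((\<lambda>i. column i B) ` {..<j})"
  obtain z where zS: "\<And>j. column j B - z j \<in> ?S j" and zo: "\<And>j w. w \<in> ?S j \<Longrightarrow> orthogonal (z j) w"
    and znz: "\<And>j. z j \<noteq> 0"
    using gram_schmidt_columns[OF inj] by blast
  have zspan: "z j \<in> span ((\<lambda>i. column i B) ` {..j})" for j
  proof -
    have "?S j \<subseteq> span ((\<lambda>i. column i B) ` {..j})" by (intro span_mono image_mono) auto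
    then have "column j B - z j \<in> span ((\<lambda>i. column i B) ` {..j})" using zS[of j] by blast
    moreover have "column j B \<in> span ((\<lambda>i. column i B) ` {..j})" by (intro span_base) auto
    ultimately have "column j B - (column j B - z j) \<in> span ((\<lambda>i. column i B) ` {..j})"
      by (rule span_diff[rotated])
    then show ?thesis by simp
  qed
  define Q :: "((real,'p) vec, 'n) vec" where "Q = (\<chi> r j. (z j /\<^sub>R norm (z j))$r)"
  have cQ: "column j Q = z j /\<^sub>R norm (z j)" for j by (simp add: column_def Q_def vec_eq_iff)
  have qspan: "column j Q \<in> span ((\<lambda>i. column i B) ` {..j})" for j
    unfolding cQ using zspan by (intro span_scale) auto
  have orth_lt: "column i Q \<bullet> column j Q = 0" if "i < j" for i j
  proof -
    have "span ((\<lambda>l. column l B) ` {..i}) \<subseteq> ?S j" using that by (intro span_mono image_mono) auto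
    then have "column i Q \<in> ?S j" using qspan[of i] by blast
    then have "orthogonal (z j) (column i Q)" by (rule zo)
    then show ?thesis by (simp add: cQ orthogonal_def inner_commute)
  qed
  have orth: "column i Q \<bullet> column j Q = (if i = j then 1 else 0)" for i j
  proof (cases i j rule: linorder_cases)
    case less then show ?thesis using orth_lt by simp
  next
    case greater then show ?thesis using orth_lt[of j i] by (simp add: inner_commute)
  next
    case equal then show ?thesis using znz[of j] by (simp add: cQ dot_square_norm power2_eq_square)
  qed
  then have Qst: "Q \<in> stiefel" by (simp add: stiefel_iff_orthonormal_columns)
  moreover have "column j Q \<bullet> column i B = 0" if "i < j" for i j
  proof -
    have "column i B \<in> ?S j" using that by (intro span_base) auto
    then show ?thesis using zo[of "column i B" j] by (simp add: cQ orthogonal_def)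
  qed
  moreover have "column j Q \<bullet> column j B > 0" for j
  proof -
    have "z j \<bullet> column j B = z j \<bullet> (column j B - z j) + z j \<bullet> z j"
      by (simp add: inner_diff_right)
    also have "z j \<bullet> (column j B - z j) = 0" using zo[OF zS[of j]] by (simp add: orthogonal_def)
    finally have "z j \<bullet> column j B = (norm (z j))^2" by (simp add: dot_square_norm)
    then show ?thesis using znz[of j] by (simp add: cQ power2_eq_square)
  qed
  ultimately show thesis using that qspan by blast
qed

lemma qr_decomposition_exists:
  fixes B :: "((real,'p::{finite,linorder}) vec, 'n::finite) vec"
  assumes inj: "\<And>v. B *v v = 0 \<Longrightarrow> v = 0"
  shows "\<exists>Q R. Q \<in> stiefel \<and> upper_triangular_pos R \<and> B = Q ** R"
proof -
  obtain Q where Qst: "Q \<in> stiefel" and qspan: "\<And>j. column j Q \<in> span ((\<lambda>i. column i B) ` {..j})"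
    and lower: "\<And>i j. i < j \<Longrightarrow> column j Q \<bullet> column i B = 0"
    and diag: "\<And>j. column j Q \<bullet> column j B > 0"
    using gram_schmidt_orthonormal_columns[OF inj] by blast
  have orth: "column i Q \<bullet> column j Q = (if i = j then 1 else 0)" for i j
    using Qst by (simp add: stiefel_iff_orthonormal_columns)
  define R where "R = transpose Q ** B"
  have Rij: "R$i$j = column i Q \<bullet> column j B" for i j by (simp add: R_def transpose_matrix_mult_component)
  have Rup: "upper_triangular_pos R"
    unfolding upper_triangular_pos_def Rij using lower diag by blast
  have "B = Q ** R"
  proof (rule matrix_eq_columnsI)
    fix j
    have "span ((\<lambda>i. column i Q) ` UNIV) = span ((\<lambda>i. column i B) ` UNIV)"
    proof (rule span_orthonormal_columns_eq)
      show "column i Q \<bullet> column k Q = (if i = k then 1 else 0)" for i k by (rule orth)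
      show "(\<lambda>i. column i Q) ` UNIV \<subseteq> span ((\<lambda>i. column i B) ` UNIV)"
      proof clarify
        fix i
        have "span ((\<lambda>l. column l B) ` {..i}) \<subseteq> span ((\<lambda>i. column i B) ` UNIV)" by (intro span_mono image_mono) auto
        then show "column i Q \<in> span ((\<lambda>i. column i B) ` UNIV)" using qspan[of i] by blast
      qed
    qed
    moreover have "column j B \<in> span ((\<lambda>i. column i B) ` UNIV)" by (intro span_base) auto
    ultimately have "column j B = (\<Sum>i\<in>UNIV. (column i Q \<bullet> column j B) *\<^sub>R column i Q)"
      by (intro orthonormal_family_expand) (auto simp: orth)
    also have "\<dots> = column j (Q ** R)" by (simp add: column_matrix_mult Rij)
    finally show "column j B = column j (Q ** R)" .
  qed
  then show ?thesis using Qst Rup by blast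
qed

lemma qf_qr_decomposition:
  fixes B :: "((real,'p::{finite,linorder}) vec, 'n::finite) vec"
  assumes inj: "\<And>v. B *v v = 0 \<Longrightarrow> v = 0"
  shows "qf B \<in> stiefel \<and> (\<exists>R. upper_triangular_pos R \<and> B = qf B ** R)"
proof -
  obtain Q R where QR: "Q \<in> stiefel" "upper_triangular_pos R" "B = Q ** R"
    using qr_decomposition_exists[OF inj] by blast
  show ?thesis unfolding qf_def
  proof (rule theI[of _ Q])
    show "Q \<in> stiefel \<and> (\<exists>R. upper_triangular_pos R \<and> B = Q ** R)" using QR by blast
  qed (use qr_decomposition_unique[OF QR] in blast)
qed

section \<open>Orthonormal bases with orthogonal images\<close>

lemma linear_le_quadratic_imp_zero:
  fixes c k :: real
  assumes "\<And>\<epsilon>. 2 * \<epsilon> * c \<le> \<epsilon>^2 * k"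
  shows "c = 0"
proof (rule ccontr)
  assume c: "c \<noteq> 0"
  define D where "D = \<bar>k\<bar> + 1"
  have D: "D > 0" unfolding D_def by simp
  have "2 * (c/D) * c \<le> (c/D)^2 * k" by (rule assms)
  then have "2 * c^2 * D \<le> c^2 * k" using D by (simp add: field_simps power2_eq_square)
  also have "\<dots> \<le> c^2 * \<bar>k\<bar>" by (simp add: mult_left_mono)
  finally have "c^2 * (\<bar>k\<bar> + 2) \<le> 0" unfolding D_def by (simp add: algebra_simps)
  moreover have "c^2 * (\<bar>k\<bar> + 2) > 0" using c by simp
  ultimately show False by simp
qed

text \<open>First-order condition at a maximiser of \<open>\<parallel>f u\<parallel>\<^sup>2\<close> on the unit sphere of \<open>W\<close>.\<close>
lemma orthogonal_images_at_maximiser: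
  fixes f :: "'a::real_inner \<Rightarrow> 'b::real_inner"
  assumes f: "linear f" and W: "subspace W" and v: "v \<in> W" "v \<bullet> v = 1" and w: "w \<in> W" "v \<bullet> w = 0"
    and max: "\<And>u. u \<in> W \<Longrightarrow> f u \<bullet> f u \<le> (f v \<bullet> f v) * (u \<bullet> u)"
  shows "f v \<bullet> f w = 0"
proof (rule linear_le_quadratic_imp_zero)
  fix \<epsilon> :: real
  let ?lam = "f v \<bullet> f v"
  have "f (v + \<epsilon> *\<^sub>R w) \<bullet> f (v + \<epsilon> *\<^sub>R w) \<le> ?lam * ((v + \<epsilon> *\<^sub>R w) \<bullet> (v + \<epsilon> *\<^sub>R w))"
    using W v w by (intro max) (simp add: subspace_add subspace_scale)
  also have "(v + \<epsilon> *\<^sub>R w) \<bullet> (v + \<epsilon> *\<^sub>R w) = 1 + \<epsilon>^2 * (w \<bullet> w)"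
    using v w by (simp add: inner_commute[of w v] power2_eq_square algebra_simps)
  also have "f (v + \<epsilon> *\<^sub>R w) \<bullet> f (v + \<epsilon> *\<^sub>R w) = ?lam + 2*\<epsilon>*(f v \<bullet> f w) + \<epsilon>^2 * (f w \<bullet> f w)"
    using f by (simp add: linear_add linear_scale inner_commute[of "f w" "f v"] power2_eq_square
        algebra_simps)
  finally have "?lam + 2*\<epsilon>*(f v \<bullet> f w) + \<epsilon>^2 * (f w \<bullet> f w) \<le> ?lam * (1 + \<epsilon>^2 * (w \<bullet> w))" .
  moreover have "\<epsilon>^2 * (?lam * (w \<bullet> w) - f w \<bullet> f w) = ?lam * (1 + \<epsilon>^2 * (w \<bullet> w)) - ?lam - \<epsilon>^2 * (f w \<bullet> f w)"
    by (simp add: algebra_simps)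
  ultimately show "2 * \<epsilon> * (f v \<bullet> f w) \<le> \<epsilon>^2 * (?lam * (w \<bullet> w) - f w \<bullet> f w)"
    by linarith
qed

lemma exists_maximiser_norm_image:
  fixes f :: "'a::euclidean_space \<Rightarrow> 'b::real_inner"
  assumes f: "linear f" and W: "subspace W" and "W \<noteq> {0}"
  obtains v where "v \<in> W" "v \<bullet> v = 1" "\<And>u. u \<in> W \<Longrightarrow> f u \<bullet> f u \<le> (f v \<bullet> f v) * (u \<bullet> u)"
proof -
  let ?K = "W \<inter> sphere 0 1"
  let ?g = "\<lambda>u. f u \<bullet> f u"
  obtain w0 where w0: "w0 \<in> W" "w0 \<noteq> 0" using assms subspace_0[OF W] by blast
  have "w0 /\<^sub>R norm w0 \<in> ?K" using w0 W by (simp add: subspace_scale)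
  moreover have "compact ?K" by (intro closed_Int_compact closed_subspace W compact_sphere)
  moreover have "continuous_on ?K ?g"
    using f by (intro continuous_intros linear_continuous_on) (simp_all add: linear_conv_bounded_linear)
  ultimately obtain v where vK: "v \<in> ?K" and vmax: "\<And>u. u \<in> ?K \<Longrightarrow> ?g u \<le> ?g v"
    using continuous_attains_sup[of ?K ?g] by blast
  have "?g u \<le> ?g v * (u \<bullet> u)" if u: "u \<in> W" for u
  proof (cases "u = 0")
    case False
    have "?g (u /\<^sub>R norm u) \<le> ?g v" using u False W by (intro vmax) (simp add: subspace_scale)
    moreover have "?g (u /\<^sub>R norm u) = ?g u / (norm u)^2"
      using f by (simp add: linear_scale power2_eq_square divide_inverse mult.commute mult.left_commute)
    ultimately have "?g u \<le> ?g v * (norm u)^2" using False by (simp add: divide_le_eq)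
    then show ?thesis by (simp add: dot_square_norm)
  qed (use f in \<open>simp add: linear_0\<close>)
  then show thesis using that vK by (auto simp: dot_square_norm)
qed

lemma span_insert_orthogonal_complement:
  assumes W: "subspace W" and v: "v \<in> W" "v \<bullet> v = 1" and V: "span V = {w \<in> W. v \<bullet> w = 0}"
  shows "span (insert v V) = W"
proof
  show "span (insert v V) \<subseteq> W"
    using v V W span_superset[of V] by (intro span_minimal) auto
  show "W \<subseteq> span (insert v V)"
  proof
    fix w assume "w \<in> W"
    then have "w - (v \<bullet> w) *\<^sub>R v \<in> span V"
      using v W V by (auto simp: subspace_diff subspace_scale inner_diff_right)
    then have "w - (v \<bullet> w) *\<^sub>R v \<in> span (insert v V)"
      using span_mono[of V "insert v V"] by auto
    moreover have "(v \<bullet> w) *\<^sub>R v \<in> span (insert v V)" by (intro span_scale span_base) auto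
    ultimately show "w \<in> span (insert v V)" using span_add by fastforce
  qed
qed

text \<open>A singular value decomposition of \<open>f\<close> restricted to \<open>W\<close>, obtained by induction on \<open>dim W\<close>:
  a maximiser of \<open>\<parallel>f u\<parallel>\<close> on the unit sphere of \<open>W\<close> is the first basis vector.\<close>
lemma orthonormal_basis_orthogonal_images:
  fixes f :: "'a::euclidean_space \<Rightarrow> 'b::real_inner"
  assumes f: "linear f" and "subspace W"
  shows "\<exists>V. V \<subseteq> W \<and> finite V \<and> span V = W \<and> (\<forall>v\<in>V. \<forall>w\<in>V. v \<bullet> w = (if v = w then 1 else 0))
          \<and> (\<forall>v\<in>V. \<forall>w\<in>V. v \<noteq> w \<longrightarrow> f v \<bullet> f w = 0)"
  using \<open>subspace W\<close>
proof (induction "dim W" arbitrary: W rule: less_induct)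
  case less
  note W = less.prems
  show ?case
  proof (cases "W = {0}")
    case True then show ?thesis by (intro exI[of _ "{}"]) auto
  next
    case False
    obtain v where vW: "v \<in> W" and vv: "v \<bullet> v = 1"
      and max: "\<And>u. u \<in> W \<Longrightarrow> f u \<bullet> f u \<le> (f v \<bullet> f v) * (u \<bullet> u)"
      using exists_maximiser_norm_image[OF f W False] by blast
    define W' where "W' = {w \<in> W. v \<bullet> w = 0}"
    have W'sub: "subspace W'" unfolding W'_def subspace_def using W
      by (auto simp: subspace_add subspace_scale subspace_0 inner_add_right)
    have "v \<notin> W'" using vv unfolding W'_def by auto
    then have "W' \<subset> W" using vW unfolding W'_def by blast
    then have "dim W' < dim W"
      using W W'sub by (metis dim_psubset span_eq_iff)
    then obtain V' where V': "V' \<subseteq> W'" "finite V'" "span V' = W'"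
      "\<forall>v\<in>V'. \<forall>w\<in>V'. v \<bullet> w = (if v = w then 1 else 0)"
      "\<forall>v\<in>V'. \<forall>w\<in>V'. v \<noteq> w \<longrightarrow> f v \<bullet> f w = 0"
      using less.hyps[OF _ W'sub] by blast
    have vV': "v \<notin> V'" using V'(1) vv unfolding W'_def by auto
    have ov: "v \<bullet> w = 0" if "w \<in> V'" for w using V'(1) that unfolding W'_def by auto
    have ofv: "f v \<bullet> f w = 0" if "w \<in> V'" for w
      using V'(1) that unfolding W'_def by (intro orthogonal_images_at_maximiser[OF f W vW vv _ _ max]) auto
    show ?thesis
    proof (intro exI[of _ "insert v V'"] conjI ballI impI)
      show "insert v V' \<subseteq> W" using vW V'(1) unfolding W'_def by auto
      show "finite (insert v V')" using V'(2) by simp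
      show "span (insert v V') = W"
        using span_insert_orthogonal_complement[OF W vW vv] V'(3) unfolding W'_def by blast
      fix a b assume a: "a \<in> insert v V'" and b: "b \<in> insert v V'"
      show "a \<bullet> b = (if a = b then 1 else 0)"
        using a b V'(4) vv ov vV' by (auto simp: inner_commute)
      assume "a \<noteq> b"
      then show "f a \<bullet> f b = 0"
        using a b V'(5) ofv by (auto simp: inner_commute)
    qed
  qed
qed

section \<open>The Brockett cost along a line in the Stiefel manifold\<close>

lemma sum_inner_linear_orthonormal_family_eq:
  fixes f :: "'i \<Rightarrow> 'a::real_inner" and g :: "'j \<Rightarrow> 'a" and L :: "'a \<Rightarrow> 'a"
  assumes L: "linear L" and I: "finite I" and J: "finite J"
    and fo: "\<And>i k. i \<in> I \<Longrightarrow> k \<in> I \<Longrightarrow> f i \<bullet> f k = (if i = k then 1 else 0)"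
    and go: "\<And>i k. i \<in> J \<Longrightarrow> k \<in> J \<Longrightarrow> g i \<bullet> g k = (if i = k then 1 else 0)"
    and sp: "span (f ` I) = span (g ` J)"
  shows "(\<Sum>j\<in>J. g j \<bullet> L (g j)) = (\<Sum>i\<in>I. f i \<bullet> L (f i))"
proof -
  have "g j \<bullet> L (g j) = (\<Sum>i\<in>I. (f i \<bullet> g j) * (f i \<bullet> L (g j)))" if "j \<in> J" for j
  proof -
    have "g j = (\<Sum>i\<in>I. (f i \<bullet> g j) *\<^sub>R f i)"
      using that sp by (intro orthonormal_family_expand[OF I fo]) (auto intro: span_base)
    then have "g j \<bullet> L (g j) = (\<Sum>i\<in>I. (f i \<bullet> g j) *\<^sub>R f i) \<bullet> L (g j)"
      by (rule arg_cong)
    then show ?thesis by (simp add: inner_sum_left)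
  qed
  moreover have "f i \<bullet> L (f i) = (\<Sum>j\<in>J. (f i \<bullet> g j) * (f i \<bullet> L (g j)))" if "i \<in> I" for i
  proof -
    have "f i = (\<Sum>j\<in>J. (g j \<bullet> f i) *\<^sub>R g j)"
      using that sp by (intro orthonormal_family_expand[OF J go]) (auto intro: span_base simp flip: sp)
    then have "L (f i) = L (\<Sum>j\<in>J. (g j \<bullet> f i) *\<^sub>R g j)"
      by (rule arg_cong)
    also have "\<dots> = (\<Sum>j\<in>J. (g j \<bullet> f i) *\<^sub>R L (g j))"
      by (simp add: linear_sum[OF L] linear_scale[OF L])
    finally show ?thesis by (simp add: inner_sum_right inner_commute)
  qed
  ultimately show ?thesis
    by (simp add: sum.swap[of _ J I])
qed

lemma brockett_diag_eq_sum_columns: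
  fixes A :: "real^'n^'n" and Q :: "real^'p^'n" and \<mu> :: "real^'p"
  shows "brockett A (diag_mat \<mu>) Q = (\<Sum>j\<in>UNIV. \<mu>$j * (column j Q \<bullet> (A *v column j Q)))"
proof -
  have diag: "(M ** diag_mat \<mu>)$j$j = M$j$j * \<mu>$j" for M :: "real^'p^'p" and j
    by (simp add: matrix_matrix_mult_def diag_mat_def if_distrib[of "\<lambda>z. _ * z"] cong: if_cong)
  have "(transpose Q ** A ** Q)$j$j = column j Q \<bullet> (A *v column j Q)" for j
  proof -
    have "(transpose Q ** A ** Q)$j$j = (\<Sum>r\<in>UNIV. \<Sum>s\<in>UNIV. Q$s$j * (A$s$r * Q$r$j))"
      by (simp add: matrix_matrix_mult_def transpose_def sum_distrib_right mult.assoc)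
    also have "\<dots> = (\<Sum>s\<in>UNIV. Q$s$j * (\<Sum>r\<in>UNIV. A$s$r * Q$r$j))"
      by (subst sum.swap) (simp add: sum_distrib_left)
    finally show ?thesis by (simp add: column_def inner_vec_def matrix_vector_mult_def)
  qed
  then show ?thesis unfolding brockett_def trace_def diag by (simp add: mult.commute)
qed

lemma stiefel_isometry:
  assumes "X \<in> stiefel"
  shows "(X *v v) \<bullet> (X *v w) = v \<bullet> w"
  using assms unfolding stiefel_def
  by (simp add: inner_matrix_vector_transpose matrix_vector_mul_assoc)

lemma stiefel_tangent_inner_skew:
  assumes "\<eta> \<in> stiefel_tangent X"
  shows "(X *v v) \<bullet> (\<eta> *v w) + (\<eta> *v v) \<bullet> (X *v w) = 0"
proof -
  have "(X *v v) \<bullet> (\<eta> *v w) + (\<eta> *v v) \<bullet> (X *v w) = v \<bullet> ((transpose X ** \<eta> + transpose \<eta> ** X) *v w)"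
    by (simp add: inner_matrix_vector_transpose matrix_vector_mul_assoc matrix_vector_mult_add_rdistrib
        inner_add_right)
  also have "\<dots> = 0" using assms unfolding stiefel_tangent_def by simp
  finally show ?thesis .
qed

lemma inner_stiefel_line:
  assumes X: "X \<in> stiefel" and \<eta>: "\<eta> \<in> stiefel_tangent X"
  shows "((X + s *\<^sub>R \<eta>) *v v) \<bullet> ((X + s *\<^sub>R \<eta>) *v w) = v \<bullet> w + s^2 * ((\<eta> *v v) \<bullet> (\<eta> *v w))"
proof -
  have "(X + s *\<^sub>R \<eta>) *v u = X *v u + s *\<^sub>R (\<eta> *v u)" for u
    by (simp add: matrix_vector_mult_add_rdistrib scaleR_matrix_vector_assoc)
  then have "((X + s *\<^sub>R \<eta>) *v v) \<bullet> ((X + s *\<^sub>R \<eta>) *v w) =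
     (X *v v) \<bullet> (X *v w) + s * ((X *v v) \<bullet> (\<eta> *v w) + (\<eta> *v v) \<bullet> (X *v w)) + s^2 * ((\<eta> *v v) \<bullet> (\<eta> *v w))"
    by (simp add: power2_eq_square algebra_simps)
  then show ?thesis using stiefel_isometry[OF X] stiefel_tangent_inner_skew[OF \<eta>] by simp
qed

lemma stiefel_line_injective:
  assumes X: "X \<in> stiefel" and \<eta>: "\<eta> \<in> stiefel_tangent X" and "(X + s *\<^sub>R \<eta>) *v v = 0"
  shows "v = 0"
proof -
  have "v \<bullet> v \<le> ((X + s *\<^sub>R \<eta>) *v v) \<bullet> ((X + s *\<^sub>R \<eta>) *v v)"
    unfolding inner_stiefel_line[OF X \<eta>] by simp
  then show ?thesis using assms(3) by (metis inner_zero_left inner_gt_zero_iff not_less)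
qed

lemma rayleigh_quotient_stiefel_line:
  fixes A :: "real^'n^'n" and s :: real
  assumes A: "transpose A = A" and X: "X \<in> stiefel" and \<eta>: "\<eta> \<in> stiefel_tangent X" and "v \<bullet> v = 1"
  defines "u \<equiv> (X + s *\<^sub>R \<eta>) *v v"
  shows "u \<bullet> (A *v u) / (u \<bullet> u) = rayleigh_along A (X *v v) (\<eta> *v v) s"
proof -
  have "u = X *v v + s *\<^sub>R (\<eta> *v v)"
    unfolding u_def by (simp add: matrix_vector_mult_add_rdistrib scaleR_matrix_vector_assoc)
  then show ?thesis
    using stiefel_isometry[OF X, of v v] stiefel_tangent_inner_skew[OF \<eta>, of v v] assms(4)
    by (simp add: rayleigh_along_eq[OF _ _ A] inner_commute)
qed

definition compressed_trace :: "real^'n^'n \<Rightarrow> real^'p^'n \<Rightarrow> 'p set \<Rightarrow> real" where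
  "compressed_trace A Q S = (\<Sum>i\<in>S. column i Q \<bullet> (A *v column i Q))"

text \<open>The vectors \<open>(X + s\<eta>) v\<close>, \<open>v \<in> V\<close>, are orthogonal and span the same space as the columns
  indexed by \<open>S\<close> of the Q-factor; normalised, they split the trace into Rayleigh quotients along
  the lines \<open>X v + s \<eta> v\<close>.\<close>
lemma compressed_trace_qf_stiefel_line:
  fixes A :: "real^'n^'n" and X \<eta> :: "((real,'p::{finite,linorder}) vec, 'n::finite) vec"
    and V :: "(real,'p) vec set"
  assumes A: "transpose A = A" and X: "X \<in> stiefel" and \<eta>: "\<eta> \<in> stiefel_tangent X"
    and S: "down_closed S" and V: "finite V" "span V = span ((\<lambda>i. axis i 1) ` S)"
    and Vo: "\<forall>v\<in>V. \<forall>w\<in>V. v \<bullet> w = (if v = w then 1 else 0)"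
    and V\<eta>: "\<forall>v\<in>V. \<forall>w\<in>V. v \<noteq> w \<longrightarrow> (\<eta> *v v) \<bullet> (\<eta> *v w) = 0"
  shows "compressed_trace A (qf (X + s *\<^sub>R \<eta>)) S = (\<Sum>v\<in>V. rayleigh_along A (X *v v) (\<eta> *v v) s)"
proof -
  define B where "B = X + s *\<^sub>R \<eta>"
  have gram: "(B *v v) \<bullet> (B *v w) = v \<bullet> w + s^2 * ((\<eta> *v v) \<bullet> (\<eta> *v w))" for v w
    unfolding B_def by (rule inner_stiefel_line[OF X \<eta>])
  have inj: "v = 0" if "B *v v = 0" for v
    using stiefel_line_injective[OF X \<eta>] that unfolding B_def by blast
  have Bnz: "B *v v \<noteq> 0" if "v \<in> V" for v
    using inj Vo that by fastforce
  define Q where "Q = qf B"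
  obtain R where Q: "Q \<in> stiefel" and QR: "upper_triangular_pos R" "B = Q ** R"
    using qf_qr_decomposition[of B] inj unfolding Q_def by blast
  define g where "g v = (1 / norm (B *v v)) *\<^sub>R (B *v v)" for v
  have go: "g v \<bullet> g w = (if v = w then 1 else 0)" if "v \<in> V" "w \<in> V" for v w
  proof (cases "v = w")
    case True
    then show ?thesis using Bnz[OF that(1)] by (simp add: g_def dot_square_norm power2_eq_square)
  next
    case False
    then have "(B *v v) \<bullet> (B *v w) = 0" unfolding gram using Vo V\<eta> that by auto
    then show ?thesis using False by (simp add: g_def)
  qed
  have "span ((\<lambda>i. column i Q) ` S) = span ((\<lambda>v. B *v v) ` V)"
    by (rule span_columns_qr_image[OF QR S V(2)])
  also have "\<dots> = span ((\<lambda>x. (1 / norm x) *\<^sub>R x) ` (\<lambda>v. B *v v) ` V)"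
    using V(1) Bnz by (intro span_image_scale[symmetric]) auto
  finally have "span ((\<lambda>i. column i Q) ` S) = span (g ` V)"
    by (simp add: image_image g_def)
  then have "compressed_trace A Q S = (\<Sum>v\<in>V. g v \<bullet> (A *v g v))"
    unfolding compressed_trace_def
    using Q V(1) go by (intro sum_inner_linear_orthonormal_family_eq[symmetric]
        matrix_vector_mul_linear) (auto simp: stiefel_iff_orthonormal_columns)
  also have "\<dots> = (\<Sum>v\<in>V. rayleigh_along A (X *v v) (\<eta> *v v) s)"
  proof (rule sum.cong)
    fix v assume v: "v \<in> V"
    have "g v \<bullet> (A *v g v) = (B *v v) \<bullet> (A *v (B *v v)) / ((B *v v) \<bullet> (B *v v))"
      by (simp add: g_def matrix_vector_mult_scaleR dot_square_norm power2_eq_square divide_inverse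
          mult.commute mult.left_commute)
    also have "\<dots> = rayleigh_along A (X *v v) (\<eta> *v v) s"
      unfolding B_def using Vo v by (intro rayleigh_quotient_stiefel_line[OF A X \<eta>]) simp
    finally show "g v \<bullet> (A *v g v) = rayleigh_along A (X *v v) (\<eta> *v v) s" .
  qed simp
  finally show ?thesis unfolding Q_def B_def .
qed

lemma compressed_trace_qf_stiefel_line_deriv:
  fixes A :: "real^'n^'n" and X \<eta> :: "((real,'p::{finite,linorder}) vec, 'n::finite) vec"
  assumes A: "transpose A = A" and X: "X \<in> stiefel" and \<eta>: "\<eta> \<in> stiefel_tangent X"
    and S: "down_closed S" and C: "norm \<eta> \<le> C" and t: "t \<ge> 0"
  defines "T \<equiv> \<lambda>s. compressed_trace A (qf (X + s *\<^sub>R \<eta>)) S"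
  shows "(T has_real_derivative deriv T s) (at s)"
    and "\<bar>deriv T t - deriv T 0\<bar> \<le> CARD('p) * (9 * norm A * C^2 * t)"
proof -
  obtain V where V: "finite V" "span V = span ((\<lambda>i. axis i 1) ` S)"
    and Vo: "\<forall>v\<in>V. \<forall>w\<in>V. v \<bullet> w = (if v = w then 1 else 0)"
    and V\<eta>: "\<forall>v\<in>V. \<forall>w\<in>V. v \<noteq> w \<longrightarrow> (\<eta> *v v) \<bullet> (\<eta> *v w) = 0"
    using orthonormal_basis_orthogonal_images[OF matrix_vector_mul_linear[of \<eta>],
        of "span ((\<lambda>i. axis i 1) ` S)"] by auto
  define T' where "T' s = (\<Sum>v\<in>V. rayleigh_along_deriv A (X *v v) (\<eta> *v v) s)" for s
  have "T = (\<lambda>s. \<Sum>v\<in>V. rayleigh_along A (X *v v) (\<eta> *v v) s)"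
    unfolding T_def using compressed_trace_qf_stiefel_line[OF A X \<eta> S V Vo V\<eta>] by (intro ext)
  then have T: "(T has_real_derivative T' s) (at s)" for s
    unfolding T'_def by (simp add: DERIV_sum has_real_derivative_rayleigh_along)
  have derivT: "deriv T s = T' s" for s
    by (rule DERIV_imp_deriv[OF T])
  show "(T has_real_derivative deriv T s) (at s)"
    unfolding derivT by (rule T)
  have "\<bar>rayleigh_along_deriv A (X *v v) (\<eta> *v v) t - rayleigh_along_deriv A (X *v v) (\<eta> *v v) 0\<bar>
          \<le> 9 * norm A * C^2 * t" if v: "v \<in> V" for v
  proof (rule rayleigh_along_deriv_lipschitz[OF _ _ t])
    have "norm v = 1" using Vo v by (simp add: norm_eq_1)
    then show "norm (X *v v) = 1" using stiefel_isometry[OF X, of v v] by (simp add: norm_eq_1)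
    have "norm (\<eta> *v v) \<le> C"
      using norm_matrix_vector_le[of \<eta> v] C \<open>norm v = 1\<close> by simp
    then show "(\<eta> *v v) \<bullet> (\<eta> *v v) \<le> C^2"
      by (metis dot_square_norm norm_ge_zero power_mono)
  qed
  then have "(\<Sum>v\<in>V. \<bar>rayleigh_along_deriv A (X *v v) (\<eta> *v v) t - rayleigh_along_deriv A (X *v v) (\<eta> *v v) 0\<bar>)
              \<le> card V * (9 * norm A * C^2 * t)"
    by (rule sum_bounded_above)
  moreover have "\<bar>T' t - T' 0\<bar>
      \<le> (\<Sum>v\<in>V. \<bar>rayleigh_along_deriv A (X *v v) (\<eta> *v v) t - rayleigh_along_deriv A (X *v v) (\<eta> *v v) 0\<bar>)"
    unfolding T'_def sum_subtractf[symmetric] by (rule sum_abs)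
  ultimately have "\<bar>T' t - T' 0\<bar> \<le> card V * (9 * norm A * C^2 * t)"
    by (rule order_trans[rotated])
  also have "\<dots> \<le> CARD('p) * (9 * norm A * C^2 * t)"
    using card_orthonormal_le[OF Vo] t by (simp add: mult_right_mono)
  finally show "\<bar>deriv T t - deriv T 0\<bar> \<le> CARD('p) * (9 * norm A * C^2 * t)"
    unfolding derivT .
qed

lemma brockett_qf_stiefel_line_deriv_lipschitz:
  fixes A :: "real^'n^'n" and \<mu> :: "(real,'p::{finite,linorder}) vec"
    and X \<eta> :: "((real,'p) vec, 'n::finite) vec"
  assumes A: "transpose A = A" and X: "X \<in> stiefel" and \<eta>: "\<eta> \<in> stiefel_tangent X"
    and C: "norm \<eta> \<le> C" and t: "t \<ge> 0"
  defines "f \<equiv> \<lambda>s. brockett A (diag_mat \<mu>) (qf (X + s *\<^sub>R \<eta>))"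
  shows "\<bar>deriv f t - deriv f 0\<bar> \<le> (\<Sum>j\<in>UNIV. \<bar>\<mu>$j\<bar>) * (2 * CARD('p) * (9 * norm A * C^2 * t))"
proof -
  define T where "T S s = compressed_trace A (qf (X + s *\<^sub>R \<eta>)) S" for S s
  define K where "K = CARD('p) * (9 * norm A * C^2 * t)"
  have down: "down_closed {..j}" "down_closed {..<j}" for j :: 'p
    by (auto simp: down_closed_def)
  note T_deriv = compressed_trace_qf_stiefel_line_deriv[OF A X \<eta> _ C t, folded T_def]
  have "T {..j} s - T {..<j} s = column j Q \<bullet> (A *v column j Q)" if "Q = qf (X + s *\<^sub>R \<eta>)" for j s Q
  proof -
    have "{..j} = insert j {..<j}" by auto
    then show ?thesis unfolding T_def compressed_trace_def that by simp
  qed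
  then have f_eq: "f = (\<lambda>s. \<Sum>j\<in>UNIV. \<mu>$j * (T {..j} s - T {..<j} s))"
    unfolding f_def by (simp add: brockett_diag_eq_sum_columns)
  define D where "D s = (\<Sum>j\<in>UNIV. \<mu>$j * (deriv (T {..j}) s - deriv (T {..<j}) s))" for s
  have "(f has_real_derivative D s) (at s)" for s
    unfolding f_eq D_def by (intro DERIV_sum DERIV_cmult DERIV_diff T_deriv(1) down)
  then have deriv_f: "deriv f s = D s" for s
    by (rule DERIV_imp_deriv)
  have "\<bar>\<mu>$j * (deriv (T {..j}) t - deriv (T {..<j}) t) - \<mu>$j * (deriv (T {..j}) 0 - deriv (T {..<j}) 0)\<bar>
          \<le> \<bar>\<mu>$j\<bar> * (2 * K)" for j
  proof -
    have "\<bar>(deriv (T {..j}) t - deriv (T {..j}) 0) - (deriv (T {..<j}) t - deriv (T {..<j}) 0)\<bar> \<le> 2 * K"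
      using T_deriv(2)[OF down(1), of j] T_deriv(2)[OF down(2), of j] unfolding K_def by linarith
    then show ?thesis by (simp add: abs_mult mult_left_mono flip: right_diff_distrib)
  qed
  then have "\<bar>D t - D 0\<bar> \<le> (\<Sum>j\<in>UNIV. \<bar>\<mu>$j\<bar> * (2 * K))"
    unfolding D_def sum_subtractf[symmetric] by (rule order_trans[OF sum_abs sum_mono])
  then show ?thesis
    unfolding deriv_f K_def by (simp add: sum_distrib_right)
qed

section \<open>Riemannian metrics on the Stiefel manifold\<close>

lemma smooth_on_subset_imp_continuous_on:
  assumes "smooth_on_subset S f"
  shows "continuous_on S f"
proof -
  have "continuous (at z within S) f" if z: "z \<in> S" for z
  proof -
    obtain U F where U: "z \<in> U" "smooth_on U F" "\<forall>w\<in>U \<inter> S. F w = f w"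
      using assms z unfolding smooth_on_subset_def by blast
    have oU: "open U" using U(2) unfolding smooth_on_def by blast
    have cF: "continuous_on U F" using U(2) unfolding smooth_on_def by (metis ddiff.simps(1))
    have "continuous (at z within S) F"
      using cF oU U(1) by (simp add: continuous_on_eq_continuous_at continuous_at_imp_continuous_within)
    moreover obtain d where "d > 0" "ball z d \<subseteq> U" using oU U(1) open_contains_ball by blast
    ultimately show ?thesis
      using U(3) z by (elim continuous_transform_within) (auto simp: dist_commute subset_iff)
  qed
  then show ?thesis by (simp add: continuous_on_eq_continuous_within)
qed

lemma continuous_on_transpose_matrix_mult:
  fixes f :: "'a::topological_space \<Rightarrow> real^'p^'n" and g :: "'a \<Rightarrow> real^'q^'n"
  assumes "continuous_on S f" "continuous_on S g"
  shows "continuous_on S (\<lambda>z. transpose (f z) ** g z)"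
  unfolding matrix_matrix_mult_def transpose_def by (intro continuous_intros assms)

lemma norm_stiefel:
  assumes "X \<in> stiefel"
  shows "norm (X :: real^'p^'n) = sqrt CARD('p)"
proof -
  have "(norm X)^2 = (\<Sum>i\<in>UNIV. \<Sum>j\<in>UNIV. X$i$j * X$i$j)"
    by (simp add: power2_norm_eq_inner inner_vec_def)
  also have "\<dots> = (\<Sum>j\<in>UNIV. \<Sum>i\<in>UNIV. X$i$j * X$i$j)" by (rule sum.swap)
  also have "\<dots> = (\<Sum>j\<in>(UNIV::'p set). column j X \<bullet> column j X)"
    by (simp add: column_def inner_vec_def)
  also have "\<dots> = CARD('p)" using assms by (simp add: stiefel_iff_orthonormal_columns)
  finally show ?thesis by (metis norm_ge_zero real_sqrt_unique)
qed

lemma compact_stiefel: "compact (stiefel :: (real^'p^'n) set)"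
proof (rule compact_eq_bounded_closed[THEN iffD2], rule conjI)
  show "bounded (stiefel :: (real^'p^'n) set)"
    unfolding bounded_iff using norm_stiefel by (metis order_refl)
  show "closed (stiefel :: (real^'p^'n) set)"
    unfolding stiefel_def
    by (intro closed_Collect_eq continuous_on_transpose_matrix_mult continuous_on_id continuous_on_const)
qed

lemma stiefel_tangent_scaleR: "\<eta> \<in> stiefel_tangent X \<Longrightarrow> r *\<^sub>R \<eta> \<in> stiefel_tangent X"
  unfolding stiefel_tangent_def
  by (simp add: transpose_scalar matrix_scalar_ac flip: scalar_matrix_assoc scaleR_right_distrib)

lemma riemannian_metric_stiefel_scaleR:
  assumes g: "riemannian_metric_stiefel g" and X: "X \<in> stiefel" and \<eta>: "\<eta> \<in> stiefel_tangent X"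
  shows "g X (r *\<^sub>R \<eta>) (r *\<^sub>R \<eta>) = r^2 * g X \<eta> \<eta>"
proof -
  have lin: "g X (r *\<^sub>R \<eta>) \<zeta> = r * g X \<eta> \<zeta>" if "\<zeta> \<in> stiefel_tangent X" for \<zeta>
    using g X \<eta> that unfolding riemannian_metric_stiefel_def
    by (metis (no_types, lifting) add.right_neutral mult_zero_left scaleR_zero_left)
  have "g X (r *\<^sub>R \<eta>) (r *\<^sub>R \<eta>) = r * g X \<eta> (r *\<^sub>R \<eta>)"
    using lin stiefel_tangent_scaleR[OF \<eta>] by simp
  also have "g X \<eta> (r *\<^sub>R \<eta>) = g X (r *\<^sub>R \<eta>) \<eta>"
    using g X \<eta> stiefel_tangent_scaleR[OF \<eta>] unfolding riemannian_metric_stiefel_def by blast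
  also have "\<dots> = r * g X \<eta> \<eta>" using lin \<eta> by simp
  finally show ?thesis by (simp add: power2_eq_square)
qed

text \<open>By compactness of the unit sphere bundle of \<open>St(p,n)\<close> in the ambient Euclidean norm.\<close>
lemma riemannian_metric_stiefel_unit_lower_bound:
  fixes g :: "((real, 'p::finite) vec, 'n::finite) vec \<Rightarrow> ((real, 'p) vec, 'n) vec \<Rightarrow> ((real, 'p) vec, 'n) vec \<Rightarrow> real"
  assumes g: "riemannian_metric_stiefel g"
  obtains c where "c > 0" "\<And>X \<eta>. X \<in> stiefel \<Longrightarrow> \<eta> \<in> stiefel_tangent X \<Longrightarrow> norm \<eta> = 1 \<Longrightarrow> c \<le> g X \<eta> \<eta>"
proof -
  let ?T = "(stiefel \<times> sphere (0::real^'p^'n) 1) \<inter> {z. transpose (fst z) ** snd z + transpose (snd z) ** fst z = 0}"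
  have T: "(X, \<eta>) \<in> ?T \<longleftrightarrow> X \<in> stiefel \<and> \<eta> \<in> stiefel_tangent X \<and> norm \<eta> = 1" for X \<eta>
    by (auto simp: stiefel_tangent_def)
  have "compact ?T"
    by (intro compact_Int_closed compact_Times compact_stiefel compact_sphere closed_Collect_eq
        continuous_intros continuous_on_transpose_matrix_mult)
  moreover have "continuous_on ?T (\<lambda>z. g (fst z) (snd z) (snd z))"
  proof -
    have "continuous_on {(X, \<xi>, \<eta>). X \<in> stiefel \<and> \<xi> \<in> stiefel_tangent X \<and> \<eta> \<in> stiefel_tangent X}
            (\<lambda>(X, \<xi>, \<eta>). g X \<xi> \<eta>)"
      using g unfolding riemannian_metric_stiefel_def by (intro smooth_on_subset_imp_continuous_on) blast
    then have "continuous_on ?T ((\<lambda>(X, \<xi>, \<eta>). g X \<xi> \<eta>) \<circ> (\<lambda>z. (fst z, snd z, snd z)))"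
      by (intro continuous_on_compose continuous_intros, elim continuous_on_subset)
        (auto simp: stiefel_tangent_def)
    then show ?thesis by (simp add: o_def case_prod_beta)
  qed
  moreover have "g (fst z) (snd z) (snd z) > 0" if "z \<in> ?T" for z
    using g that T[of "fst z" "snd z"] unfolding riemannian_metric_stiefel_def
    by (metis norm_zero prod.collapse zero_neq_one)
  ultimately show thesis
  proof (cases "?T = {}")
    case False
    assume "compact ?T" "continuous_on ?T (\<lambda>z. g (fst z) (snd z) (snd z))"
      and pos: "\<And>z. z \<in> ?T \<Longrightarrow> g (fst z) (snd z) (snd z) > 0"
    obtain z where "z \<in> ?T" "\<And>y. y \<in> ?T \<Longrightarrow> g (fst z) (snd z) (snd z) \<le> g (fst y) (snd y) (snd y)"
      using continuous_attains_inf[OF \<open>compact ?T\<close> False] \<open>continuous_on ?T _\<close> by blast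
    then show thesis using that[of "g (fst z) (snd z) (snd z)"] pos T by fastforce
  qed (use that[of 1] T in auto)
qed

lemma riemannian_metric_stiefel_unit_norm_bounded:
  fixes g :: "((real, 'p::finite) vec, 'n::finite) vec \<Rightarrow> ((real, 'p) vec, 'n) vec \<Rightarrow> ((real, 'p) vec, 'n) vec \<Rightarrow> real"
  assumes g: "riemannian_metric_stiefel g"
  obtains C where "\<And>X \<eta>. X \<in> stiefel \<Longrightarrow> \<eta> \<in> stiefel_tangent X \<Longrightarrow> g X \<eta> \<eta> = 1 \<Longrightarrow> norm \<eta> \<le> C"
proof -
  obtain c where c: "c > 0" "\<And>X \<eta>. X \<in> stiefel \<Longrightarrow> \<eta> \<in> stiefel_tangent X \<Longrightarrow> norm \<eta> = 1 \<Longrightarrow> c \<le> g X \<eta> \<eta>"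
    using riemannian_metric_stiefel_unit_lower_bound[OF g] by blast
  have "norm \<eta> \<le> sqrt (1 / c)" if X: "X \<in> stiefel" and \<eta>: "\<eta> \<in> stiefel_tangent X" and g1: "g X \<eta> \<eta> = 1" for X \<eta>
  proof -
    have "\<eta> \<noteq> 0"
      using g1 riemannian_metric_stiefel_scaleR[OF g X \<eta>, of 0] by auto
    then have "c \<le> g X ((1 / norm \<eta>) *\<^sub>R \<eta>) ((1 / norm \<eta>) *\<^sub>R \<eta>)"
      using X \<eta> by (intro c(2) stiefel_tangent_scaleR) auto
    also have "\<dots> = 1 / (norm \<eta>)^2"
      unfolding riemannian_metric_stiefel_scaleR[OF g X \<eta>] g1 by (simp add: power_divide)
    finally have "(norm \<eta>)^2 \<le> 1 / c" using \<open>\<eta> \<noteq> 0\<close> c(1) by (simp add: field_simps)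
    then show ?thesis using real_le_rsqrt by blast
  qed
  then show thesis by (rule that)
qed

section \<open>The Lipschitz bounds\<close>

lemma example_metric_ge_inner: "\<eta> \<bullet> \<eta> \<le> example_metric x \<eta> \<eta>"
  for x \<eta> :: "real^'n::{finite,linorder}"
proof -
  define w where "w i = (if i = first_idx then 10000 * (x $ first_idx)^2 + 1 else 1)" for i :: 'n
  have "(\<chi> i j. if i = j then w i else 0) *v \<eta> = (\<chi> i. w i * \<eta>$i)"
    by (simp add: matrix_vector_mult_def vec_eq_iff if_distrib[of "\<lambda>z. z * _"] cong: if_cong)
  then have "example_metric x \<eta> \<eta> = (\<Sum>i\<in>UNIV. w i * (\<eta>$i * \<eta>$i))"
    unfolding example_metric_def w_def[symmetric] by (simp add: inner_vec_def algebra_simps)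
  also have "\<dots> \<ge> (\<Sum>i\<in>UNIV. \<eta>$i * \<eta>$i)"
    by (intro sum_mono) (simp add: w_def distrib_right)
  finally show ?thesis by (simp add: inner_vec_def)
qed

lemma rayleigh_sphere_retr_eq_rayleigh_along:
  fixes x \<eta> :: "real^'n" and A :: "real^'n^'n"
  assumes "norm x = 1" "x \<bullet> \<eta> = 0" "transpose A = A"
  shows "rayleigh A (sphere_retr x (s *\<^sub>R \<eta>)) = rayleigh_along A x \<eta> s"
proof -
  let ?u = "x + s *\<^sub>R \<eta>"
  have "rayleigh A (sphere_retr x (s *\<^sub>R \<eta>)) = ?u \<bullet> (A *v ?u) / (?u \<bullet> ?u)"
    unfolding rayleigh_def sphere_retr_def
    by (simp add: matrix_vector_mult_scaleR power2_norm_eq_inner[symmetric] power2_eq_square)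
  then show ?thesis using assms by (simp add: rayleigh_along_eq norm_eq_1)
qed

lemma sphere_example_lipschitz:
  fixes A :: "((real, 'n::{finite,linorder}) vec, 'n) vec"
  assumes "transpose A = A"
  shows "\<exists>L>0. \<forall>x::(real, 'n) vec. norm x = 1 \<longrightarrow> (\<forall>\<eta>. x \<bullet> \<eta> = 0 \<longrightarrow> example_metric x \<eta> \<eta> = 1 \<longrightarrow>
          (\<forall>t\<ge>0.
             \<bar>deriv (\<lambda>s. rayleigh A (sphere_retr x (s *\<^sub>R \<eta>))) t
              - deriv (\<lambda>s. rayleigh A (sphere_retr x (s *\<^sub>R \<eta>))) 0\<bar>
             \<le> L * t))"
proof (intro exI[of _ "9 * norm A + 1"] conjI allI impI)
  fix x \<eta> :: "(real, 'n) vec" and t :: real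
  assume x: "norm x = 1" and x\<eta>: "x \<bullet> \<eta> = 0" and g: "example_metric x \<eta> \<eta> = 1" and t: "0 \<le> t"
  have "\<eta> \<bullet> \<eta> \<le> 1" using example_metric_ge_inner[of \<eta> x] g by simp
  have curve: "(\<lambda>s. rayleigh A (sphere_retr x (s *\<^sub>R \<eta>))) = rayleigh_along A x \<eta>"
    using rayleigh_sphere_retr_eq_rayleigh_along[OF x x\<eta> assms] by (intro ext)
  have "deriv (rayleigh_along A x \<eta>) s = rayleigh_along_deriv A x \<eta> s" for s
    by (rule DERIV_imp_deriv[OF has_real_derivative_rayleigh_along])
  then have "\<bar>deriv (\<lambda>s. rayleigh A (sphere_retr x (s *\<^sub>R \<eta>))) t
              - deriv (\<lambda>s. rayleigh A (sphere_retr x (s *\<^sub>R \<eta>))) 0\<bar> \<le> 9 * norm A * 1 * t"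
    unfolding curve by (simp only: rayleigh_along_deriv_lipschitz[OF x \<open>\<eta> \<bullet> \<eta> \<le> 1\<close> t])
  also have "\<dots> \<le> (9 * norm A + 1) * t" using t by (simp add: mult_right_mono)
  finally show "\<bar>deriv (\<lambda>s. rayleigh A (sphere_retr x (s *\<^sub>R \<eta>))) t
              - deriv (\<lambda>s. rayleigh A (sphere_retr x (s *\<^sub>R \<eta>))) 0\<bar> \<le> (9 * norm A + 1) * t" .
qed (simp add: add_nonneg_pos)

lemma stiefel_brockett_qf_deriv_lipschitz:
  fixes A :: "((real, 'n::finite) vec, 'n) vec" and \<mu> :: "(real, 'p::{finite,linorder}) vec"
    and g :: "((real, 'p) vec, 'n) vec \<Rightarrow> ((real, 'p) vec, 'n) vec \<Rightarrow> ((real, 'p) vec, 'n) vec \<Rightarrow> real"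
  assumes A: "transpose A = A" and g: "riemannian_metric_stiefel g"
  shows "\<exists>L>0. \<forall>X\<in>stiefel. \<forall>\<eta>\<in>stiefel_tangent X. g X \<eta> \<eta> = 1 \<longrightarrow>
          (\<forall>t\<ge>0.
             \<bar>deriv (\<lambda>s. brockett A (diag_mat \<mu>) (qf (X + s *\<^sub>R \<eta>))) t
              - deriv (\<lambda>s. brockett A (diag_mat \<mu>) (qf (X + s *\<^sub>R \<eta>))) 0\<bar> \<le> L * t)"
proof -
  obtain C where C: "\<And>X \<eta>. X \<in> stiefel \<Longrightarrow> \<eta> \<in> stiefel_tangent X \<Longrightarrow> g X \<eta> \<eta> = 1 \<Longrightarrow> norm \<eta> \<le> C"
    using riemannian_metric_stiefel_unit_norm_bounded[OF g] by blast
  define K where "K = (\<Sum>j\<in>UNIV. \<bar>\<mu>$j\<bar>) * (2 * CARD('p) * (9 * norm A * C^2))"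
  have "K \<ge> 0" unfolding K_def by (intro mult_nonneg_nonneg sum_nonneg) auto
  show ?thesis
  proof (intro exI[of _ "K + 1"] conjI ballI impI allI)
    fix X \<eta> and t :: real
    assume X: "X \<in> stiefel" and \<eta>: "\<eta> \<in> stiefel_tangent X" and "g X \<eta> \<eta> = 1" and t: "0 \<le> t"
    then have "\<bar>deriv (\<lambda>s. brockett A (diag_mat \<mu>) (qf (X + s *\<^sub>R \<eta>))) t
              - deriv (\<lambda>s. brockett A (diag_mat \<mu>) (qf (X + s *\<^sub>R \<eta>))) 0\<bar> \<le> K * t"
      using brockett_qf_stiefel_line_deriv_lipschitz[OF A X \<eta> C t] unfolding K_def
      by (simp add: mult.assoc)
    also have "\<dots> \<le> (K + 1) * t" using t by (simp add: mult_right_mono)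
    finally show "\<bar>deriv (\<lambda>s. brockett A (diag_mat \<mu>) (qf (X + s *\<^sub>R \<eta>))) t
              - deriv (\<lambda>s. brockett A (diag_mat \<mu>) (qf (X + s *\<^sub>R \<eta>))) 0\<bar> \<le> (K + 1) * t" .
  qed (use \<open>K \<ge> 0\<close> in simp)
qed

theorem mainTheorem6:
  fixes A :: "((real, 'n::{finite,linorder}) vec, 'n) vec"
  assumes "CARD('p) \<le> CARD('n)"
    and "transpose A = A"
  shows
   "(\<forall>(\<mu>::(real, 'p::{finite,linorder}) vec) (g :: ((real, 'p) vec, 'n) vec \<Rightarrow> ((real, 'p) vec, 'n) vec \<Rightarrow> ((real, 'p) vec, 'n) vec \<Rightarrow> real).
       (\<forall>i. 0 < \<mu> $ i) \<and> (\<forall>i j. i < j \<longrightarrow> \<mu> $ i < \<mu> $ j) \<and> riemannian_metric_stiefel g \<longrightarrow>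
       (\<exists>L>0. \<forall>X\<in>stiefel. \<forall>\<eta>\<in>stiefel_tangent X. g X \<eta> \<eta> = 1 \<longrightarrow>
          (\<forall>t\<ge>0.
             \<bar>deriv (\<lambda>s. brockett A (diag_mat \<mu>) (qf (X + s *\<^sub>R \<eta>))) t
              - deriv (\<lambda>s. brockett A (diag_mat \<mu>) (qf (X + s *\<^sub>R \<eta>))) 0\<bar> \<le> L * t)))
    \<and>
    (\<exists>L>0. \<forall>x::(real, 'n) vec. norm x = 1 \<longrightarrow> (\<forall>\<eta>. x \<bullet> \<eta> = 0 \<longrightarrow> example_metric x \<eta> \<eta> = 1 \<longrightarrow>
          (\<forall>t\<ge>0.
             \<bar>deriv (\<lambda>s. rayleigh A (sphere_retr x (s *\<^sub>R \<eta>))) t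
              - deriv (\<lambda>s. rayleigh A (sphere_retr x (s *\<^sub>R \<eta>))) 0\<bar>
             \<le> L * t)))"
  using stiefel_brockett_qf_deriv_lipschitz[OF assms(2)] sphere_example_lipschitz[OF assms(2)]
  by blast

end
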